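(* Let $S_6$ be the simple undirected graph on vertex set $\{1,2,\dots,33\}$ whose edges are the path edges $\{j,j+1\}$ for $j=1,\dots,32$ together with the ten edges $\{1,24\},\{4,9\},\{6,31\},\{7,12\},\{10,15\},\{13,18\},\{16,27\},\{22,33\},\{25,30\},\{28,33\}$. Designate incoming vertices $i_1=1,\ i_2=7,\ i_3=13,\ i_4=19,\ i_5=25,\ i_6=31$ and outgoing vertices $o_1=33,\ o_2=27,\ o_3=3,\ o_4=9,\ o_5=21,\ o_6=15$. Let $G$ be any finite simple undirected graph that contains $S_6$ as an induced subgraph, has at least one vertex not in $S_6$, and is such that every edge of $G$ joining a vertex of $S_6$ to a vertex outside $S_6$ has its endpoint in $S_6$ belonging to $\{i_1,\dots,i_6,o_1,\dots,o_6\}$. Then for every Hamiltonian cycle $H$ of $G$, the edges of $H$ having both endpoints in $S_6$ form a single path that visits every vertex of $S_6$ (i.e. $H$ enters $S_6$ exactly once, traverses all of it, and leaves), and the two endpoints of this path are $i_k$ and $o_k$ for some $k\in\{1,\dots,6\}$.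
   Context: A Hamiltonian cycle of a graph is a cycle passing through every vertex exactly once. This is the "in-out property" for the subgraph $S_6$: each copy of it behaves like a single vertex in any Hamiltonian cycle, and a cycle entering at the $k$-th incoming vertex must leave at the $k$-th outgoing vertex. *)

theory Defs
  imports Main
begin

definition simple_graph :: "'a set \<Rightarrow> ('a \<Rightarrow> 'a \<Rightarrow> bool) \<Rightarrow> bool" where
  "simple_graph V E \<longleftrightarrow> finite V \<and> (\<forall>x y. E x y \<longrightarrow> x \<in> V \<and> y \<in> V)
     \<and> (\<forall>x y. E x y \<longrightarrow> E y x) \<and> (\<forall>x. \<not> E x x)"

definition S6_extra :: "(nat \<times> nat) set" where
  "S6_extra = {(1,24),(4,9),(6,31),(7,12),(10,15),(13,18),(16,27),(22,33),(25,30),(28,33)}"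

definition S6_edge :: "nat \<Rightarrow> nat \<Rightarrow> bool" where
  "S6_edge u v \<longleftrightarrow> u \<in> {1..33} \<and> v \<in> {1..33} \<and>
     (v = u + 1 \<or> u = v + 1 \<or> (u, v) \<in> S6_extra \<or> (v, u) \<in> S6_extra)"

definition S6_in :: "nat list" where "S6_in = [1, 7, 13, 19, 25, 31]"
definition S6_out :: "nat list" where "S6_out = [33, 27, 3, 9, 21, 15]"

definition ham_cycle :: "'a set \<Rightarrow> ('a \<Rightarrow> 'a \<Rightarrow> bool) \<Rightarrow> 'a list \<Rightarrow> bool" where
  "ham_cycle V E cs \<longleftrightarrow> length cs \<ge> 3 \<and> distinct cs \<and> set cs = V \<and>
     (\<forall>i < length cs. E (cs ! i) (cs ! ((i + 1) mod length cs)))"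

definition cycle_edges :: "'a list \<Rightarrow> 'a set set" where
  "cycle_edges cs = {{cs ! i, cs ! ((i + 1) mod length cs)} | i. i < length cs}"

end

(*
  Every vertex of S6 has at most two H-neighbours, and a vertex that is not a terminal has
  both of its H-neighbours inside S6, because only terminals have neighbours outside.
  The edges of H inside S6 contain no cycle: a cycle all of whose edges lie on the
  Hamiltonian cycle H passes through every vertex of G, but some vertex lies outside S6.
  These conditions are propositional constraints on the 42 edges of S6, and the degree
  conditions together with the exclusion of eleven particular cycles of S6 admit exactly six
  solutions, the Hamiltonian paths of S6 from i_k to o_k.
*)
theory Submission
  imports Defs
begin

lemma mod_pred_succ:
  assumes "i < (n::nat)" shows "((i + n - 1) mod n + 1) mod n = i"
proof -
  have "((i + n - 1) mod n + 1) mod n = (i + n - 1 + 1) mod n" by (simp add: mod_Suc_eq)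
  also have "i + n - 1 + 1 = i + n" using assms by linarith
  finally show ?thesis using assms by simp
qed

lemma cycle_edges_nth_iff:
  assumes d: "distinct cs" and i: "i < length cs"
  shows "{cs!i, y} \<in> cycle_edges cs \<longleftrightarrow>
     y = cs!((i+1) mod length cs) \<or> y = cs!((i + length cs - 1) mod length cs)"
proof
  let ?n = "length cs"
  assume "{cs!i, y} \<in> cycle_edges cs"
  then obtain j where j: "j < ?n" and eq: "{cs!i, y} = {cs!j, cs!((j+1) mod ?n)}"
    unfolding cycle_edges_def by blast
  have jn: "(j+1) mod ?n < ?n" using j by (auto intro: mod_less_divisor)
  from eq consider "cs!i = cs!j" "y = cs!((j+1) mod ?n)" | "cs!i = cs!((j+1) mod ?n)" "y = cs!j"
    by (auto simp: doubleton_eq_iff)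
  then show "y = cs!((i+1) mod ?n) \<or> y = cs!((i + ?n - 1) mod ?n)"
  proof cases
    case 1
    then have "i = j" using d i j nth_eq_iff_index_eq by blast
    then show ?thesis using 1 by simp
  next
    case 2
    then have "i = (j+1) mod ?n" using d i jn nth_eq_iff_index_eq by blast
    then have "j = (i + ?n - 1) mod ?n"
    proof (cases "j + 1 < ?n")
      case False
      then have "j + 1 = ?n" using j by simp
      with \<open>i = (j+1) mod ?n\<close> show ?thesis by simp
    qed simp
    then show ?thesis using 2 by simp
  qed
next
  let ?n = "length cs"
  assume "y = cs!((i+1) mod ?n) \<or> y = cs!((i + ?n - 1) mod ?n)"
  then show "{cs!i, y} \<in> cycle_edges cs"
  proof
    assume "y = cs!((i+1) mod ?n)"
    then show ?thesis unfolding cycle_edges_def using i by blast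
  next
    assume y: "y = cs!((i + ?n - 1) mod ?n)"
    let ?j = "(i + ?n - 1) mod ?n"
    have "{cs!i, y} = {cs!?j, cs!((?j+1) mod ?n)}" using y mod_pred_succ[OF i] by auto
    moreover have "?j < ?n" using i by (auto intro: mod_less_divisor)
    ultimately show ?thesis unfolding cycle_edges_def by blast
  qed
qed

lemma cycle_succ_neq_pred:
  assumes d: "distinct cs" and l: "3 \<le> length cs" and i: "i < length cs"
  shows "cs!((i+1) mod length cs) \<noteq> cs!((i + length cs - 1) mod length cs)"
proof -
  let ?n = "length cs"
  have "(i+1) mod ?n \<noteq> (i + ?n - 1) mod ?n"
  proof (cases "i = 0")
    case True then show ?thesis using l by simp
  next
    case False
    then have "(i + ?n - 1) mod ?n = i - 1"
      using i by (metis add.commute add_diff_assoc2 less_imp_diff_less mod_add_self1 mod_less One_nat_def Suc_leI neq0_conv)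
    then show ?thesis using i l False by (cases "i + 1 = ?n") auto
  qed
  moreover have "(i+1) mod ?n < ?n" "(i + ?n - 1) mod ?n < ?n" using i by (auto intro: mod_less_divisor)
  ultimately show ?thesis using d nth_eq_iff_index_eq by metis
qed

lemma cycle_edges_subset_set:
  assumes "e \<in> cycle_edges cs" shows "e \<subseteq> set cs"
proof -
  have "(i + 1) mod length cs < length cs" if "i < length cs" for i
    using that by (auto intro: mod_less_divisor)
  then show ?thesis using assms unfolding cycle_edges_def by auto
qed

lemma cycle_edges_two_neighbours:
  assumes "distinct cs" "3 \<le> length cs" "x \<in> set cs"
  obtains a b where "a \<noteq> b" "{x, a} \<in> cycle_edges cs" "{x, b} \<in> cycle_edges cs"
proof -
  obtain i where i: "i < length cs" "cs!i = x" using assms(3) by (metis in_set_conv_nth)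
  show ?thesis
    using that cycle_succ_neq_pred[OF assms(1,2) i(1)] cycle_edges_nth_iff[OF assms(1) i(1)] i(2)
    by blast
qed

lemma cycle_edges_degree_le_two:
  assumes "distinct cs"
    and "{x, a} \<in> cycle_edges cs" "{x, b} \<in> cycle_edges cs" "{x, c} \<in> cycle_edges cs"
  shows "a = b \<or> a = c \<or> b = c"
proof -
  have "x \<in> set cs" using assms(2) cycle_edges_subset_set by blast
  then obtain i where i: "i < length cs" "cs!i = x" by (metis in_set_conv_nth)
  then show ?thesis using assms cycle_edges_nth_iff[OF assms(1) i(1)] by metis
qed

text \<open>The vertex set of C is closed under the successor map of H: the two H-neighbours of a
  vertex of C are its two C-neighbours.\<close>
lemma cycle_edges_subset_imp_same_vertices:
  assumes C: "distinct C" "3 \<le> length C" and H: "distinct H" "3 \<le> length H"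
    and sub: "cycle_edges C \<subseteq> cycle_edges H"
  shows "set C = set H"
proof
  show C_sub_H: "set C \<subseteq> set H"
  proof
    fix x assume "x \<in> set C"
    then obtain a where "{x, a} \<in> cycle_edges C" using cycle_edges_two_neighbours[OF C] by metis
    then show "x \<in> set H" using sub cycle_edges_subset_set by blast
  qed
  let ?n = "length H"
  have succ: "H!((i+1) mod ?n) \<in> set C" if i: "i < ?n" "H!i \<in> set C" for i
  proof -
    obtain a b where ab: "a \<noteq> b" "{H!i, a} \<in> cycle_edges C" "{H!i, b} \<in> cycle_edges C"
      using cycle_edges_two_neighbours[OF C i(2)] .
    then have "a \<in> set C" "b \<in> set C" using cycle_edges_subset_set by blast+
    moreover have "a = H!((i+1) mod ?n) \<or> a = H!((i + ?n - 1) mod ?n)"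
      "b = H!((i+1) mod ?n) \<or> b = H!((i + ?n - 1) mod ?n)"
      using ab sub cycle_edges_nth_iff[OF H(1) i(1)] by blast+
    ultimately show ?thesis using ab(1) by metis
  qed
  have "C!0 \<in> set C" using C(2) by (intro nth_mem) linarith
  then have "C!0 \<in> set H" using C_sub_H by blast
  then obtain i0 where i0: "i0 < ?n" "H!i0 = C!0" by (metis in_set_conv_nth)
  have reach: "H!((i0 + j) mod ?n) \<in> set C" for j
  proof (induction j)
    case 0
    then show ?case using i0 \<open>C!0 \<in> set C\<close> by simp
  next
    case (Suc j)
    have "(i0 + j) mod ?n < ?n" using i0(1) by (auto intro: mod_less_divisor)
    then have "H!(((i0 + j) mod ?n + 1) mod ?n) \<in> set C" using succ Suc.IH by blast
    then show ?case by (simp add: mod_Suc_eq)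
  qed
  show "set H \<subseteq> set C"
  proof
    fix x assume "x \<in> set H"
    then obtain j where j: "j < ?n" "H!j = x" by (metis in_set_conv_nth)
    have "(i0 + (?n - i0 + j)) mod ?n = j" using i0(1) j(1) by simp
    then show "x \<in> set C" using reach[of "?n - i0 + j"] j(2) by simp
  qed
qed

lemma cycle_edges_Cons:
  "cycle_edges (x # xs) = (\<lambda>(a, b). {a, b}) ` set (zip (x # xs) (xs @ [x]))"
proof -
  have "(xs @ [x]) ! i = (x # xs) ! ((i + 1) mod Suc (length xs))" if "i < Suc (length xs)" for i
    using that by (cases "i = length xs") (auto simp: nth_append)
  then show ?thesis
    unfolding cycle_edges_def set_zip by (auto simp: image_iff) metis+
qed

lemma ham_cycle_edge_adjacent:
  assumes "simple_graph V E" "ham_cycle V E cs" "{a, b} \<in> cycle_edges cs"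
  shows "E a b"
proof -
  obtain i where i: "i < length cs" and e: "{a, b} = {cs!i, cs!((i+1) mod length cs)}"
    using assms(3) unfolding cycle_edges_def by blast
  have "E (cs!i) (cs!((i+1) mod length cs))" using assms(2) i unfolding ham_cycle_def by blast
  then show ?thesis using e assms(1) unfolding simple_graph_def by (auto simp: doubleton_eq_iff)
qed

definition S6_edges :: "(nat \<times> nat) list" where
  "S6_edges = [(u, u + 1). u \<leftarrow> [1..<33]] @
     [(1,24),(4,9),(6,31),(7,12),(10,15),(13,18),(16,27),(22,33),(25,30),(28,33)]"

lemma S6_edge_iff_S6_edges: "S6_edge u v \<longleftrightarrow> (u, v) \<in> set S6_edges \<or> (v, u) \<in> set S6_edges"
proof -
  have "set S6_edges = (\<lambda>u. (u, u + 1)) ` {1..<33} \<union> S6_extra"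
    unfolding S6_edges_def S6_extra_def by simp
  moreover have "S6_extra \<subseteq> {1..33} \<times> {1..33}"
    unfolding S6_extra_def by simp
  ultimately show ?thesis unfolding S6_edge_def by auto
qed

definition S6_nbrs :: "nat \<Rightarrow> nat list" where
  "S6_nbrs u = [v. (w, v) \<leftarrow> S6_edges, w = u] @ [w. (w, v) \<leftarrow> S6_edges, v = u]"

lemma S6_edge_iff_nbrs: "S6_edge u v \<longleftrightarrow> v \<in> set (S6_nbrs u)"
  unfolding S6_edge_iff_S6_edges S6_nbrs_def by (auto simp del: upt_Suc)

locale S6_in_ham_cycle =
  fixes V :: "'a set" and E :: "'a \<Rightarrow> 'a \<Rightarrow> bool" and f :: "nat \<Rightarrow> 'a" and H :: "'a list"
  assumes graph: "simple_graph V E"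
    and inj_f: "inj_on f {1..33}" and f_into_V: "f ` {1..33} \<subseteq> V"
    and induced: "\<forall>u\<in>{1..33}. \<forall>v\<in>{1..33}. E (f u) (f v) \<longleftrightarrow> S6_edge u v"
    and outside: "V - f ` {1..33} \<noteq> {}"
    and attach: "\<forall>u\<in>{1..33}. \<forall>w\<in>V - f ` {1..33}. E (f u) w \<longrightarrow> u \<in> set S6_in \<union> set S6_out"
    and ham: "ham_cycle V E H"
begin

definition traversed :: "nat \<Rightarrow> nat \<Rightarrow> bool" where
  "traversed u v \<longleftrightarrow> {f u, f v} \<in> cycle_edges H"

lemma H_distinct: "distinct H" and H_length_ge_3: "3 \<le> length H" and set_H: "set H = V"
  using ham unfolding ham_cycle_def by auto

lemma traversed_commute: "traversed u v = traversed v u"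
  unfolding traversed_def by (simp add: insert_commute)

lemma traversed_imp_S6_edge: "u \<in> {1..33} \<Longrightarrow> v \<in> {1..33} \<Longrightarrow> traversed u v \<Longrightarrow> S6_edge u v"
  using induced ham_cycle_edge_adjacent[OF graph ham] unfolding traversed_def by blast

lemma traversed_degree_le_two:
  assumes "a \<in> {1..33}" "b \<in> {1..33}" "c \<in> {1..33}" "distinct [a, b, c]"
  shows "\<not> (traversed u a \<and> traversed u b \<and> traversed u c)"
  using cycle_edges_degree_le_two[OF H_distinct, of "f u" "f a" "f b" "f c"]
    inj_onD[OF inj_f] assms unfolding traversed_def by auto

lemma traversed_degree_ge_two:
  assumes u: "u \<in> {1..33}" "u \<notin> set S6_in \<union> set S6_out"
  shows "\<exists>a\<in>{1..33}. \<exists>b\<in>{1..33}. a \<noteq> b \<and> traversed u a \<and> traversed u b"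
proof -
  have "f u \<in> set H" using u f_into_V set_H by blast
  then obtain x y where xy: "x \<noteq> y" "{f u, x} \<in> cycle_edges H" "{f u, y} \<in> cycle_edges H"
    by (rule cycle_edges_two_neighbours[OF H_distinct H_length_ge_3])
  have "x \<in> f ` {1..33}" "y \<in> f ` {1..33}"
    using xy ham_cycle_edge_adjacent[OF graph ham] attach u set_H cycle_edges_subset_set
    by (metis DiffI insert_subset)+
  then obtain a b where ab: "a \<in> {1..33}" "b \<in> {1..33}" "x = f a" "y = f b"
    by (auto elim!: imageE)
  have "a \<noteq> b \<and> traversed u a \<and> traversed u b" using xy ab unfolding traversed_def by auto
  with ab(1,2) show ?thesis by blast
qed

lemma cycle_edges_map_subset_iff:
  "cycle_edges (map f (c # cs)) \<subseteq> cycle_edges H \<longleftrightarrow>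
     (\<forall>(a, b) \<in> set (zip (c # cs) (cs @ [c])). traversed a b)"
proof -
  have "zip (map f (c # cs)) (map f (cs @ [c])) = map (\<lambda>(a, b). (f a, f b)) (zip (c # cs) (cs @ [c]))"
    by (rule zip_map_map)
  then show ?thesis by (simp add: cycle_edges_Cons traversed_def image_subset_iff split_def)
qed

lemma no_cycle_in_gadget:
  assumes "distinct cs" "3 \<le> length cs" "set cs \<subseteq> {1..33}"
  shows "\<not> cycle_edges (map f cs) \<subseteq> cycle_edges H"
proof
  assume "cycle_edges (map f cs) \<subseteq> cycle_edges H"
  moreover have "distinct (map f cs)" using assms inj_f by (simp add: distinct_map inj_on_subset)
  ultimately have "set (map f cs) = V"
    using cycle_edges_subset_imp_same_vertices[of "map f cs" H] H_distinct H_length_ge_3 set_H assms(2)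
    by simp
  then show False using assms(3) outside by auto
qed

end

definition S6_excluded_cycles :: "nat list list" where
  "S6_excluded_cycles =
    [[4,5,6,7,8,9], [7,8,9,10,11,12], [10,11,12,13,14,15], [25,26,27,28,29,30],
     [28,29,30,31,32,33], [1,2,3,4,5,6,31,32,33,22,23,24], [16,17,18,19,20,21,22,23,24,25,26,27],
     [22,23,24,25,26,27,28,29,30,31,32,33], [1,2,3,4,5,6,7,8,9,10,11,12,13,14,15,16,17,18,19,20,21,22,23,24],
     [1,2,3,4,5,6,31,32,33,28,29,30,25,26,27,16,17,18,19,20,21,22,23,24],
     [4,5,6,31,32,33,28,29,30,25,26,27,16,17,18,13,14,15,10,11,12,7,8,9]]"

definition S6_paths :: "nat list list" where
  "S6_paths =
    [[1,2,3,4,5,6,7,8,9,10,11,12,13,14,15,16,17,18,19,20,21,22,23,24,25,26,27,28,29,30,31,32,33],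
     [7,8,9,10,11,12,13,14,15,16,17,18,19,20,21,22,23,24,1,2,3,4,5,6,31,32,33,28,29,30,25,26,27],
     [13,14,15,10,11,12,7,8,9,4,5,6,31,32,33,28,29,30,25,26,27,16,17,18,19,20,21,22,23,24,1,2,3],
     [19,20,21,22,23,24,1,2,3,4,5,6,31,32,33,28,29,30,25,26,27,16,17,18,13,14,15,10,11,12,7,8,9],
     [25,26,27,28,29,30,31,32,33,22,23,24,1,2,3,4,5,6,7,8,9,10,11,12,13,14,15,16,17,18,19,20,21],
     [31,32,33,28,29,30,25,26,27,16,17,18,19,20,21,22,23,24,1,2,3,4,5,6,7,8,9,10,11,12,13,14,15]]"

definition S6_hamiltonian_path :: "nat list \<Rightarrow> bool" where
  "S6_hamiltonian_path p \<longleftrightarrow>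
     distinct p \<and> set p = {1..33} \<and> (\<forall>(a, b)\<in>set (zip p (tl p)). S6_edge a b)"

lemma S6_hamiltonian_path_length: "S6_hamiltonian_path p \<Longrightarrow> length p = 33"
  unfolding S6_hamiltonian_path_def by (metis card_atLeastAtMost diff_Suc_1 distinct_card)

lemma S6_paths_hamiltonian: "\<forall>p\<in>set S6_paths. S6_hamiltonian_path p"
proof
  have "\<forall>p\<in>set S6_paths. distinct p \<and> length p = 33 \<and> set p \<subseteq> {1..33} \<and>
      (\<forall>(a, b)\<in>set (zip p (tl p)). S6_edge a b)"
    unfolding S6_paths_def by (simp add: S6_edge_def S6_extra_def)
  moreover fix p assume "p \<in> set S6_paths"
  ultimately have p: "distinct p" "length p = 33" "set p \<subseteq> {1..33}"
    "\<forall>(a, b)\<in>set (zip p (tl p)). S6_edge a b" by blast+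
  moreover have "set p = {1..33}"
    using p by (intro card_subset_eq) (simp_all add: distinct_card)
  ultimately show "S6_hamiltonian_path p" unfolding S6_hamiltonian_path_def by blast
qed

lemma S6_paths_length: "length S6_paths = 6"
  by (simp add: S6_paths_def)

lemma S6_paths_endpoints: "map hd S6_paths = S6_in" "map last S6_paths = S6_out"
  by (simp_all add: S6_paths_def S6_in_def S6_out_def)

context S6_in_ham_cycle
begin

text \<open>Edges are written with the smaller endpoint first, as in S6_edges, so that evaluating
  the following statements yields propositional formulas over the 42 edge atoms.\<close>

lemma traversed_min_max: "traversed (min u v) (max u v) \<longleftrightarrow> traversed u v"
  by (cases "u \<le> v") (simp_all add: min_def max_def traversed_commute)

lemma S6_nbrs_traversed_at_most_two:
  "\<forall>u\<in>{1..33}. \<forall>a\<in>set (S6_nbrs u). \<forall>b\<in>set (S6_nbrs u). \<forall>c\<in>set (S6_nbrs u).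
     distinct [a, b, c] \<longrightarrow>
     \<not> (traversed (min u a) (max u a) \<and> traversed (min u b) (max u b) \<and> traversed (min u c) (max u c))"
proof (intro ballI impI)
  fix u a b c
  assume "a \<in> set (S6_nbrs u)" "b \<in> set (S6_nbrs u)" "c \<in> set (S6_nbrs u)" "distinct [a, b, c]"
  then show "\<not> (traversed (min u a) (max u a) \<and> traversed (min u b) (max u b) \<and> traversed (min u c) (max u c))"
    unfolding traversed_min_max
    by (intro traversed_degree_le_two) (auto simp: S6_edge_def simp flip: S6_edge_iff_nbrs)
qed

lemma S6_nbrs_traversed_at_least_two:
  "\<forall>u\<in>{1..33}. u \<notin> set S6_in \<union> set S6_out \<longrightarrow>
     (\<exists>a\<in>set (S6_nbrs u). \<exists>b\<in>set (S6_nbrs u).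
        a \<noteq> b \<and> traversed (min u a) (max u a) \<and> traversed (min u b) (max u b))"
proof (intro ballI impI)
  fix u assume u: "u \<in> {1..33}" "u \<notin> set S6_in \<union> set S6_out"
  then obtain a b where ab: "a \<in> {1..33}" "b \<in> {1..33}" "a \<noteq> b" "traversed u a" "traversed u b"
    using traversed_degree_ge_two by blast
  then have "a \<in> set (S6_nbrs u)" "b \<in> set (S6_nbrs u)"
    using traversed_imp_S6_edge[OF u(1)] by (simp_all flip: S6_edge_iff_nbrs)
  with ab show "\<exists>a\<in>set (S6_nbrs u). \<exists>b\<in>set (S6_nbrs u).
      a \<noteq> b \<and> traversed (min u a) (max u a) \<and> traversed (min u b) (max u b)"
    unfolding traversed_min_max by blast
qed

lemma traversed_avoids_excluded_cycles:
  "\<forall>cs\<in>set S6_excluded_cycles. \<not> (\<forall>(a, b)\<in>set (zip cs (tl cs @ [hd cs])). traversed (min a b) (max a b))"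
proof
  fix cs assume cs: "cs \<in> set S6_excluded_cycles"
  then have "distinct cs" "3 \<le> length cs" "set cs \<subseteq> {1..33}" "cs \<noteq> []"
    unfolding S6_excluded_cycles_def by auto
  then show "\<not> (\<forall>(a, b)\<in>set (zip cs (tl cs @ [hd cs])). traversed (min a b) (max a b))"
    unfolding traversed_min_max using no_cycle_in_gadget cycle_edges_map_subset_iff by (metis list.collapse)
qed

lemma cycle_edges_in_gadget:
  "{e \<in> cycle_edges H. e \<subseteq> f ` {1..33}} = {{f u, f v} | u v. u \<in> {1..33} \<and> v \<in> {1..33} \<and> traversed u v}"
proof (intro equalityI subsetI)
  fix e assume e: "e \<in> {e \<in> cycle_edges H. e \<subseteq> f ` {1..33}}"
  then obtain i where "e = {H!i, H!((i+1) mod length H)}" unfolding cycle_edges_def by blast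
  moreover from this obtain u v where "u \<in> {1..33}" "v \<in> {1..33}" "H!i = f u" "H!((i+1) mod length H) = f v"
    using e by blast
  ultimately show "e \<in> {{f u, f v} | u v. u \<in> {1..33} \<and> v \<in> {1..33} \<and> traversed u v}"
    using e unfolding traversed_def by auto
qed (auto simp: traversed_def)

lemma traversed_iff_path_edge:
  assumes p: "S6_hamiltonian_path p"
    and agree: "\<forall>(a, b)\<in>set S6_edges. traversed a b \<longleftrightarrow> (a, b) \<in> set (zip p (tl p)) \<or> (b, a) \<in> set (zip p (tl p))"
    and uv: "u \<in> {1..33}" "v \<in> {1..33}"
  shows "traversed u v \<longleftrightarrow> (u, v) \<in> set (zip p (tl p)) \<or> (v, u) \<in> set (zip p (tl p))"
proof
  assume "traversed u v"
  then have "(u, v) \<in> set S6_edges \<or> (v, u) \<in> set S6_edges"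
    using traversed_imp_S6_edge uv S6_edge_iff_S6_edges by blast
  then show "(u, v) \<in> set (zip p (tl p)) \<or> (v, u) \<in> set (zip p (tl p))"
    using agree \<open>traversed u v\<close> traversed_commute by fast
next
  assume "(u, v) \<in> set (zip p (tl p)) \<or> (v, u) \<in> set (zip p (tl p))"
  moreover have "S6_edge u v"
    using calculation p unfolding S6_hamiltonian_path_def S6_edge_iff_S6_edges by blast
  ultimately show "traversed u v"
    using agree S6_edge_iff_S6_edges traversed_commute by fast
qed

lemma cycle_edges_in_gadget_eq_path:
  assumes p: "S6_hamiltonian_path p"
    and agree: "\<forall>(a, b)\<in>set S6_edges. traversed a b \<longleftrightarrow> (a, b) \<in> set (zip p (tl p)) \<or> (b, a) \<in> set (zip p (tl p))"
  shows "{e \<in> cycle_edges H. e \<subseteq> f ` {1..33}} = {{f (p!j), f (p!(j+1))} | j. j < 32}"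
proof -
  have len: "length p = 33" using S6_hamiltonian_path_length[OF p] .
  have zip: "set (zip p (tl p)) = {(p!j, p!(j+1)) | j. j < 32}"
    using len by (auto simp: set_zip nth_tl)
  have in_range: "p!j \<in> {1..33}" "p!(j+1) \<in> {1..33}" if "j < 32" for j
    using that len p nth_mem[of j p] nth_mem[of "j+1" p] unfolding S6_hamiltonian_path_def by auto
  have traced: "traversed u v \<longleftrightarrow> (\<exists>j<32. (u, v) = (p!j, p!(j+1)) \<or> (v, u) = (p!j, p!(j+1)))"
    if "u \<in> {1..33}" "v \<in> {1..33}" for u v
    using traversed_iff_path_edge[OF p agree that] unfolding zip by blast
  show ?thesis
  proof (unfold cycle_edges_in_gadget, intro equalityI subsetI)
    fix e assume "e \<in> {{f u, f v} | u v. u \<in> {1..33} \<and> v \<in> {1..33} \<and> traversed u v}"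
    then obtain u v j where "e = {f u, f v}" "j < 32" "(u, v) = (p!j, p!(j+1)) \<or> (v, u) = (p!j, p!(j+1))"
      using traced by blast
    then show "e \<in> {{f (p!j), f (p!(j+1))} | j. j < 32}" by (auto simp: insert_commute)
  next
    fix e assume "e \<in> {{f (p!j), f (p!(j+1))} | j. j < 32}"
    then obtain j where "j < 32" "e = {f (p!j), f (p!(j+1))}" by blast
    then show "e \<in> {{f u, f v} | u v. u \<in> {1..33} \<and> v \<in> {1..33} \<and> traversed u v}"
      using traced in_range by blast
  qed
qed

lemma traversed_edges_form_S6_path:
  "\<exists>p\<in>set S6_paths. \<forall>(a, b)\<in>set S6_edges.
     traversed a b \<longleftrightarrow> (a, b) \<in> set (zip p (tl p)) \<or> (b, a) \<in> set (zip p (tl p))"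
  using S6_nbrs_traversed_at_most_two S6_nbrs_traversed_at_least_two traversed_avoids_excluded_cycles
  unfolding atLeastAtMost_upt
  \<comment> \<open>simp rewrites the vertex 1 to Suc 0, which upt_rec_numeral does not cover\<close>
  apply (simp (no_asm_use) del: set_upt
      add: upt_conv_Cons[of "Suc 0"] numeral_2_eq_2[symmetric] upt_rec_numeral
        S6_nbrs_def S6_edges_def S6_in_def S6_out_def S6_excluded_cycles_def S6_paths_def)
  by sat

end

theorem mainTheorem2:
  fixes V :: "'a set" and E :: "'a \<Rightarrow> 'a \<Rightarrow> bool" and f :: "nat \<Rightarrow> 'a" and H :: "'a list"
  assumes graph: "simple_graph V E"
    and emb: "inj_on f {1..33}" "f ` {1..33} \<subseteq> V"
    and induced: "\<forall>u\<in>{1..33}. \<forall>v\<in>{1..33}. E (f u) (f v) \<longleftrightarrow> S6_edge u v"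
    and outside: "V - f ` {1..33} \<noteq> {}"
    and attach: "\<forall>u\<in>{1..33}. \<forall>w\<in>V - f ` {1..33}. E (f u) w \<longrightarrow> u \<in> set S6_in \<union> set S6_out"
    and ham: "ham_cycle V E H"
  shows "\<exists>p k. length p = 33 \<and> distinct p \<and> set p = {1..33} \<and> k < 6 \<and>
           ((hd p = S6_in ! k \<and> last p = S6_out ! k) \<or> (hd p = S6_out ! k \<and> last p = S6_in ! k)) \<and>
           {e \<in> cycle_edges H. e \<subseteq> f ` {1..33}} = {{f (p ! j), f (p ! (j + 1))} | j. j < 32}"
proof -
  interpret S6_in_ham_cycle V E f H
    using graph emb induced outside attach ham by unfold_locales
  obtain p where p: "p \<in> set S6_paths"
    and agree: "\<forall>(a, b)\<in>set S6_edges. traversed a b \<longleftrightarrow> (a, b) \<in> set (zip p (tl p)) \<or> (b, a) \<in> set (zip p (tl p))"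
    using traversed_edges_form_S6_path by blast
  then obtain k where k: "k < length S6_paths" "p = S6_paths ! k"
    by (metis in_set_conv_nth)
  have endpoints: "hd p = S6_in ! k \<and> last p = S6_out ! k"
    using k by (simp flip: S6_paths_endpoints)
  have path: "S6_hamiltonian_path p" using p S6_paths_hamiltonian by blast
  show ?thesis
  proof (intro exI conjI)
    show "length p = 33" using path by (rule S6_hamiltonian_path_length)
    show "distinct p" "set p = {1..33}" using path unfolding S6_hamiltonian_path_def by simp_all
    show "k < 6" using k(1) S6_paths_length by simp
    show "{e \<in> cycle_edges H. e \<subseteq> f ` {1..33}} = {{f (p ! j), f (p ! (j + 1))} | j. j < 32}"
      using path agree by (rule cycle_edges_in_gadget_eq_path)
  qed (use endpoints in blast)
qed

end
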